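(* In the LSM/LOOLSM setting of the context, for every exercise index $i$ and path $n$, the path-wise look-ahead bias satisfies $$\hat B^{[i]}_n\le I\Big[\,|\hat C^{[i]}_n-Z^{[i]}_n|\le h_n\,|V^{[i+1]}_n-Z^{[i]}_n|\,\Big]\;|V^{[i+1]}_n-Z^{[i]}_n|.$$
   Context: $N$ paths are simulated. At exercise time $t_i$ we are given: - discounted payouts $Z^{[i]}_n$; - next-step path-wise option values $V^{[i+1]}_n$; - an $N\times M$ regressor matrix $X$ of full rank with rows $x_n$. Let $H=X(X^\top X)^{-1}X^\top$ and let $h_n=x_n(X^\top X)^{-1}x_n^\top$ be the leverage, with $h_n<1$. Define: - the LSM continuation estimate $\hat C^{[i]}=HV^{[i+1]}$; - the leave-one-out estimate $\hat C'^{[i]}_n=\hat C^{[i]}_n-\dfrac{h_n(V^{[i+1]}_n-\hat C^{[i]}_n)}{1-h_n}$. The LSM update is $I[\hat C^{[i]}_n\ge Z^{[i]}_n](V^{[i+1]}_n-Z^{[i]}_n)+Z^{[i]}_n$, and the LOOLSM update is the same with $\hat C'^{[i]}_n$ in place of $\hat C^{[i]}_n$. The path-wise look-ahead bias is their difference: $$\hat B^{[i]}_n=\big(I[Z^{[i]}_n\le\hat C^{[i]}_n]-I[Z^{[i]}_n\le\hat C'^{[i]}_n]\big)(V^{[i+1]}_n-Z^{[i]}_n).$$ $I[\cdot]$ denotes the indicator function. *)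

theory Defs
  imports "HOL-Analysis.Analysis"
begin

text \<open>Regressor matrix X is N x M, rows indexed by type 'n (paths), columns by 'm.\<close>

definition hat_matrix :: "real^'m^'n \<Rightarrow> real^'n^'n" where
  "hat_matrix X = X ** matrix_inv (transpose X ** X) ** transpose X"

definition leverage :: "real^'m^'n \<Rightarrow> 'n \<Rightarrow> real" where
  "leverage X n = (X $ n) \<bullet> (matrix_inv (transpose X ** X) *v (X $ n))"

definition lsm_cont :: "real^'m^'n \<Rightarrow> real^'n \<Rightarrow> real^'n" where
  "lsm_cont X V = hat_matrix X *v V"

definition loo_cont :: "real^'m^'n \<Rightarrow> real^'n \<Rightarrow> 'n \<Rightarrow> real" where
  "loo_cont X V n = lsm_cont X V $ n
     - leverage X n * (V $ n - lsm_cont X V $ n) / (1 - leverage X n)"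

definition la_bias :: "real^'m^'n \<Rightarrow> real^'n \<Rightarrow> real^'n \<Rightarrow> 'n \<Rightarrow> real" where
  "la_bias X Z V n =
     (of_bool (Z $ n \<le> lsm_cont X V $ n) - of_bool (Z $ n \<le> loo_cont X V n)) * (V $ n - Z $ n)"

end

theory Submission
  imports Defs
begin

text \<open>Since \<open>1 - h > 0\<close>, the leave-one-out decision \<open>Z \<le> C'\<close> is the decision
  \<open>h (V - Z) \<le> C - Z\<close>. So the two exercise decisions can only disagree when \<open>C - Z\<close> lies
  between \<open>0\<close> and \<open>h (V - Z)\<close>, which forces \<open>|C - Z| \<le> h |V - Z|\<close> whenever the
  disagreement contributes a positive bias; the bias is then \<open>|V - Z|\<close>.
  The argument is pointwise in \<open>C\<close>, \<open>h\<close>, \<open>V\<close>, \<open>Z\<close>.\<close>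

lemma indicator_flip_bound:
  fixes a d h :: real
  shows "(of_bool (0 \<le> a) - of_bool (h * d \<le> a)) * d \<le> of_bool (\<bar>a\<bar> \<le> h * \<bar>d\<bar>) * \<bar>d\<bar>"
  by (cases "0 \<le> d"; cases "0 \<le> a"; cases "h * d \<le> a") auto

lemma le_loo_cont_iff:
  assumes "leverage X n < 1"
  shows "z \<le> loo_cont X V n \<longleftrightarrow> leverage X n * (V $ n - z) \<le> lsm_cont X V $ n - z"
proof -
  define h C where "h = leverage X n" and "C = lsm_cont X V $ n"
  have "h < 1" using assms by (simp add: h_def)
  have "loo_cont X V n - z = ((C - z) - h * (V $ n - z)) / (1 - h)"
    using \<open>h < 1\<close> by (simp add: loo_cont_def h_def C_def field_simps)
  then have "z \<le> loo_cont X V n \<longleftrightarrow> 0 \<le> ((C - z) - h * (V $ n - z)) / (1 - h)"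
    by linarith
  also have "\<dots> \<longleftrightarrow> h * (V $ n - z) \<le> C - z"
    using \<open>h < 1\<close> by (simp add: zero_le_divide_iff)
  finally show ?thesis by (simp add: h_def C_def)
qed

theorem lemmaA1:
  fixes X :: "nat \<Rightarrow> real^'m^'n" and Z :: "nat \<Rightarrow> real^'n" and V :: "nat \<Rightarrow> real^'n"
  assumes full_rank: "\<And>i. rank (X i) = CARD('m)"
    and lev_lt1: "\<And>i n. leverage (X i) n < 1"
  shows "la_bias (X i) (Z i) (V (Suc i)) n
    \<le> of_bool (\<bar>lsm_cont (X i) (V (Suc i)) $ n - Z i $ n\<bar>
                 \<le> leverage (X i) n * \<bar>V (Suc i) $ n - Z i $ n\<bar>)
       * \<bar>V (Suc i) $ n - Z i $ n\<bar>"
  using indicator_flip_bound [of "lsm_cont (X i) (V (Suc i)) $ n - Z i $ n"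
      "leverage (X i) n" "V (Suc i) $ n - Z i $ n"]
  by (simp add: la_bias_def le_loo_cont_iff [OF lev_lt1])

end
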